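(* There is an absolute constant $C>0$ such that for every $N\in\mathbb{N}$, all functions $f_0,f_1,f_2\colon\mathbb{Z}^2\to\mathbb{C}$ with $|f_i|\le1$ supported in $[\pm2N]^2$, and every $f_3\colon\mathbb{Z}\to\mathbb{C}$ with $|f_3|\le1$ supported in $[N]$, \[ \Big|\mathbb{E}_{x\in[\pm2N]^2,\,n\in[N]}f_0(x)f_1(x+ne_1)f_2(x+ne_2)f_3(n)\Big|\le CN^{-1/2}\|f_3\|_{U^3}, \] where $e_1=(1,0)$, $e_2=(0,1)$.
   Context: $[N]=\{1,\dots,N\}$, $[\pm N]=[-N,N]\cap\mathbb{Z}$, $\mathbb{E}_{a\in A}$ is the average over the finite set $A$. For $f\colon\mathbb{Z}\to\mathbb{C}$ and $h\in\mathbb{Z}$, $\Delta_hf(x)=f(x)\overline{f(x+h)}$, $\Delta_{h_1,\dots,h_s}=\Delta_{h_1}\cdots\Delta_{h_s}$. For finitely supported $f$, the unnormalised Gowers norm is $\|f\|_{U^s}=\big(\sum_{x,h_1,\dots,h_s\in\mathbb{Z}}\Delta_{h_1,\dots,h_s}f(x)\big)^{1/2^s}$. *)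

theory Defs
  imports "HOL-Analysis.Analysis"
begin

definition mdiff :: "int \<Rightarrow> (int \<Rightarrow> complex) \<Rightarrow> int \<Rightarrow> complex" where
  "mdiff h f x = f x * cnj (f (x + h))"

text \<open>The sum is an infinite sum over Z^4, which is a finite sum for finitely supported f.\<close>
definition gowers_U3 :: "(int \<Rightarrow> complex) \<Rightarrow> real" where
  "gowers_U3 f =
     (Re (infsum (\<lambda>(x, h1, h2, h3). mdiff h1 (mdiff h2 (mdiff h3 f)) x)
                 (UNIV :: (int \<times> int \<times> int \<times> int) set))) powr (1/8)"

end

theory Submission
  imports Defs
begin

text \<open>Write S for the unnormalised corner sum. Cauchy--Schwarz in (a, b) removes f0, and after
  the substitution p = a + n a second Cauchy--Schwarz in (p, b, h) removes f1; the trivial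
  bound then removes f2, and a last Cauchy--Schwarz leaves
  \<Sum>h,k |\<Sum>n \<Delta>h,k f3(n)|^2 = ||f3||_U3^8. All sums range over one box of side L = O(N),
  and the four steps give |S|^8 \<le> L^20 ||f3||_U3^8, i.e. |S| = O(N^(5/2) ||f3||_U3), to be
  divided by the roughly N^3 terms of the average.\<close>

lemma mdiff_nonzero_iff: "mdiff h f x \<noteq> 0 \<longleftrightarrow> f x \<noteq> 0 \<and> f (x + h) \<noteq> 0"
  by (simp add: mdiff_def)

lemma sum_interval_shift:
  fixes g :: "int \<Rightarrow> 'a::comm_monoid_add"
  assumes supp: "\<And>x. g x \<noteq> 0 \<Longrightarrow> \<bar>x\<bar> \<le> R" and "R + \<bar>c\<bar> \<le> K"
  shows "(\<Sum>x\<in>{-K..K}. g (c + x)) = (\<Sum>x\<in>{-K..K}. g x)"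
proof -
  have restrict: "sum g J = sum g {-R..R}" if "{-R..R} \<subseteq> J" "finite J" for J
  proof (rule sum.mono_neutral_right)
    show "\<forall>i\<in>J - {-R..R}. g i = 0"
      using supp by (metis DiffE abs_le_iff atLeastAtMost_iff minus_le_iff)
  qed (use that in auto)
  have "(\<Sum>x\<in>{-K..K}. g (c + x)) = (\<Sum>y\<in>{c-K..c+K}. g y)"
    by (rule sum.reindex_bij_witness[of _ "\<lambda>y. y - c" "\<lambda>x. c + x"]) auto
  also have "\<dots> = sum g {-R..R}"
    using assms(2) by (intro restrict) auto
  also have "\<dots> = (\<Sum>x\<in>{-K..K}. g x)"
    using assms(2) by (intro restrict[symmetric]) auto
  finally show ?thesis .
qed

lemma norm_sum_mult_squared_le:
  fixes u v :: "'i \<Rightarrow> 'a::real_normed_div_algebra"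
  shows "(norm (\<Sum>i\<in>A. u i * v i))\<^sup>2 \<le> (\<Sum>i\<in>A. (norm (u i))\<^sup>2) * (\<Sum>i\<in>A. (norm (v i))\<^sup>2)"
proof -
  have "norm (\<Sum>i\<in>A. u i * v i) \<le> (\<Sum>i\<in>A. norm (u i) * norm (v i))"
    by (rule order_trans[OF norm_sum]) (simp add: norm_mult)
  then have "(norm (\<Sum>i\<in>A. u i * v i))\<^sup>2 \<le> (\<Sum>i\<in>A. norm (u i) * norm (v i))\<^sup>2"
    by (simp add: power_mono)
  also have "\<dots> \<le> (\<Sum>i\<in>A. (norm (u i))\<^sup>2) * (\<Sum>i\<in>A. (norm (v i))\<^sup>2)"
    by (rule Cauchy_Schwarz_ineq_sum)
  finally show ?thesis .
qed

lemma norm_sum_mult_squared_le_card: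
  fixes u v :: "'i \<Rightarrow> 'a::real_normed_div_algebra"
  assumes "\<And>i. i \<in> A \<Longrightarrow> norm (u i) \<le> 1"
  shows "(norm (\<Sum>i\<in>A. u i * v i))\<^sup>2 \<le> card A * (\<Sum>i\<in>A. (norm (v i))\<^sup>2)"
proof -
  have "(\<Sum>i\<in>A. (norm (u i))\<^sup>2) \<le> (\<Sum>i\<in>A. 1)"
    using assms by (intro sum_mono) (simp add: power_le_one)
  then have "(\<Sum>i\<in>A. (norm (u i))\<^sup>2) \<le> card A"
    by simp
  then show ?thesis
    by (rule order_trans[OF norm_sum_mult_squared_le mult_right_mono]) (simp add: sum_nonneg)
qed

lemma of_real_norm_sum_squared:
  fixes u :: "'i \<Rightarrow> complex"
  shows "complex_of_real ((norm (\<Sum>n\<in>A. u n))\<^sup>2) = (\<Sum>n\<in>A. \<Sum>m\<in>A. u n * cnj (u m))"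
  by (simp only: complex_norm_square) (simp add: sum_product)

text \<open>The square expanded with m = n + h, as in van der Corput's inequality; no term is lost
  because u is supported in radius K/2.\<close>
lemma of_real_norm_sum_squared_shift:
  fixes u :: "int \<Rightarrow> complex"
  assumes supp: "\<And>x. u x \<noteq> 0 \<Longrightarrow> \<bar>x\<bar> \<le> R" and "2 * R \<le> K"
  shows "complex_of_real ((norm (\<Sum>n\<in>{-K..K}. u n))\<^sup>2) =
         (\<Sum>n\<in>{-K..K}. \<Sum>h\<in>{-K..K}. u n * cnj (u (n + h)))"
proof -
  have "(\<Sum>m\<in>{-K..K}. u n * cnj (u m)) = (\<Sum>h\<in>{-K..K}. u n * cnj (u (n + h)))" for n
  proof (cases "u n = 0")
    case False
    then have "R + \<bar>n\<bar> \<le> K"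
      using supp[of n] assms(2) by linarith
    then show ?thesis
      using supp by (intro sum_interval_shift[where g = "\<lambda>m. u n * cnj (u m)", symmetric]) auto
  qed simp
  then show ?thesis
    by (simp only: of_real_norm_sum_squared)
qed

lemma gowers_U3_eq_interval_sum:
  fixes f :: "int \<Rightarrow> complex"
  assumes supp: "\<And>x. f x \<noteq> 0 \<Longrightarrow> \<bar>x\<bar> \<le> R" and "2 * R \<le> K"
  shows "gowers_U3 f =
    (\<Sum>h\<in>{-K..K}. \<Sum>k\<in>{-K..K}. (norm (\<Sum>n\<in>{-K..K}. mdiff k (mdiff h f) n))\<^sup>2) powr (1/8)"
proof -
  let ?I = "{-K..K}"
  let ?D = "\<lambda>(x, h1, h2, h3). mdiff h1 (mdiff h2 (mdiff h3 f)) x"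
  have box: "z \<in> ?I \<times> ?I \<times> ?I \<times> ?I" if "?D z \<noteq> 0" for z
  proof -
    obtain x h1 h2 h3 where z: "z = (x, h1, h2, h3)" by (cases z) auto
    have "f x \<noteq> 0 \<and> f (x + h1) \<noteq> 0 \<and> f (x + h2) \<noteq> 0 \<and> f (x + h3) \<noteq> 0"
      using that unfolding z by (auto simp: mdiff_nonzero_iff)
    then show ?thesis
      using supp[of x] supp[of "x + h1"] supp[of "x + h2"] supp[of "x + h3"] assms(2)
      unfolding z by auto
  qed
  have supp_diff: "\<bar>x\<bar> \<le> R" if "mdiff k (mdiff h f) x \<noteq> 0" for h k x
    using that supp by (auto simp: mdiff_nonzero_iff)
  have "infsum ?D UNIV = sum ?D (?I \<times> ?I \<times> ?I \<times> ?I)"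
    by (subst infsum_cong_neutral[where T = "?I \<times> ?I \<times> ?I \<times> ?I"]) (use box in auto)
  also have "\<dots> = (\<Sum>(h3, h2, x, h1) \<in> ?I \<times> ?I \<times> ?I \<times> ?I. mdiff h1 (mdiff h2 (mdiff h3 f)) x)"
    by (rule sum.reindex_bij_witness[of _ "\<lambda>(h3, h2, x, h1). (x, h1, h2, h3)"
          "\<lambda>(x, h1, h2, h3). (h3, h2, x, h1)"]) auto
  also have "\<dots> = (\<Sum>h\<in>?I. \<Sum>k\<in>?I. \<Sum>n\<in>?I. \<Sum>l\<in>?I.
      mdiff k (mdiff h f) n * cnj (mdiff k (mdiff h f) (n + l)))"
    by (simp add: sum.cartesian_product' mdiff_def[of _ "mdiff _ (mdiff _ f)"])
  also have "\<dots> = (\<Sum>h\<in>?I. \<Sum>k\<in>?I. complex_of_real ((norm (\<Sum>n\<in>?I. mdiff k (mdiff h f) n))\<^sup>2))"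
    by (simp only: of_real_norm_sum_squared_shift[OF supp_diff assms(2)])
  also have "\<dots> = complex_of_real (\<Sum>h\<in>?I. \<Sum>k\<in>?I. (norm (\<Sum>n\<in>?I. mdiff k (mdiff h f) n))\<^sup>2)"
    by simp
  finally show ?thesis
    unfolding gowers_U3_def by simp
qed

locale corner_average =
  fixes N :: nat and f0 f1 f2 :: "int \<times> int \<Rightarrow> complex" and f3 :: "int \<Rightarrow> complex"
  assumes N_pos: "N \<ge> 1"
    and norm_f0_le: "norm (f0 x) \<le> 1"
    and norm_f1_le: "norm (f1 x) \<le> 1"
    and norm_f2_le: "norm (f2 x) \<le> 1"
    and f0_supp: "f0 x \<noteq> 0 \<Longrightarrow> x \<in> {-2 * int N..2 * int N} \<times> {-2 * int N..2 * int N}"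
    and f2_supp: "f2 x \<noteq> 0 \<Longrightarrow> x \<in> {-2 * int N..2 * int N} \<times> {-2 * int N..2 * int N}"
    and f3_supp: "f3 n \<noteq> 0 \<Longrightarrow> n \<in> {1..int N}"
begin

text \<open>All sums run over the box {-K..K}; K = 10N leaves room for every change of variables
  below, which shifts functions supported in radius 3N by at most N.\<close>
definition K :: int where "K = 10 * int N"

definition L :: real where "L = real (card {-K..K})"

definition "w a b n = f1 (a + n, b) * f2 (a, b + n) * f3 n"
definition "W a b = (\<Sum>n\<in>{-K..K}. w a b n)"
definition "S = (\<Sum>a\<in>{-K..K}. \<Sum>b\<in>{-K..K}. f0 (a, b) * W a b)"
definition "T1 = (\<Sum>a\<in>{-K..K}. \<Sum>b\<in>{-K..K}. (norm (W a b))\<^sup>2)"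

definition "F1 p b h = f1 (p, b) * cnj (f1 (p + h, b))"
definition "F2 a c h = f2 (a, c) * cnj (f2 (a, c + h))"
definition "V p b h = (\<Sum>n\<in>{-K..K}. F2 (p - n) (b + n) h * mdiff h f3 n)"
definition "T2 = (\<Sum>p\<in>{-K..K}. \<Sum>b\<in>{-K..K}. \<Sum>h\<in>{-K..K}. (norm (V p b h))\<^sup>2)"

definition "Y h k = (\<Sum>p\<in>{-K..K}. \<Sum>b\<in>{-K..K}. F2 p b h * cnj (F2 (p - k) (b + k) h))"
definition "G h k = (\<Sum>n\<in>{-K..K}. mdiff k (mdiff h f3) n)"
definition "Q = (\<Sum>h\<in>{-K..K}. \<Sum>k\<in>{-K..K}. norm (G h k))"
definition "U = (\<Sum>h\<in>{-K..K}. \<Sum>k\<in>{-K..K}. (norm (G h k))\<^sup>2)"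

lemma L_eq: "L = 20 * real N + 1"
  unfolding L_def K_def by simp

lemma L_nonneg: "L \<ge> 0"
  unfolding L_def by simp

lemma two_N_le_K: "2 * int N \<le> K"
  unfolding K_def by simp

lemma f3_supp_abs: "f3 n \<noteq> 0 \<Longrightarrow> \<bar>n\<bar> \<le> int N"
  using f3_supp by fastforce

lemma norm_S_squared_le: "(norm S)\<^sup>2 \<le> L\<^sup>2 * T1"
proof -
  have "S = (\<Sum>x\<in>{-K..K} \<times> {-K..K}. f0 x * W (fst x) (snd x))"
    unfolding S_def by (simp add: sum.cartesian_product')
  also have "(norm \<dots>)\<^sup>2 \<le> card ({-K..K} \<times> {-K..K}) * (\<Sum>x\<in>{-K..K} \<times> {-K..K}. (norm (W (fst x) (snd x)))\<^sup>2)"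
    by (rule norm_sum_mult_squared_le_card) (rule norm_f0_le)
  also have "\<dots> = L\<^sup>2 * T1"
    unfolding L_def T1_def by (simp add: card_cartesian_product power2_eq_square sum.cartesian_product')
  finally show ?thesis .
qed

lemma sum_w_correlation_eq:
  "(\<Sum>a\<in>{-K..K}. \<Sum>h\<in>{-K..K}. w a b n * cnj (w a b (n + h))) =
   (\<Sum>p\<in>{-K..K}. \<Sum>h\<in>{-K..K}. F1 p b h * (F2 (p - n) (b + n) h * mdiff h f3 n))"
proof (cases "f3 n = 0")
  case True
  then show ?thesis by (simp add: w_def mdiff_def)
next
  case False
  then have n: "\<bar>n\<bar> \<le> int N" by (rule f3_supp_abs)
  have "(\<Sum>a\<in>{-K..K}. \<Sum>h\<in>{-K..K}. w a b n * cnj (w a b (n + h))) =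
        (\<Sum>p\<in>{-K..K}. \<Sum>h\<in>{-K..K}. w (-n + p) b n * cnj (w (-n + p) b (n + h)))"
  proof (rule sum_interval_shift[where R = "2 * int N", symmetric])
    fix a assume "(\<Sum>h\<in>{-K..K}. w a b n * cnj (w a b (n + h))) \<noteq> 0"
    then obtain h where "w a b n * cnj (w a b (n + h)) \<noteq> 0"
      by (rule sum.not_neutral_contains_not_neutral)
    then have "f2 (a, b + n) \<noteq> 0" by (auto simp: w_def)
    then show "\<bar>a\<bar> \<le> 2 * int N" using f2_supp by fastforce
  next
    show "2 * int N + \<bar>- n\<bar> \<le> K" using n unfolding K_def by simp
  qed
  also have "\<dots> = (\<Sum>p\<in>{-K..K}. \<Sum>h\<in>{-K..K}. F1 p b h * (F2 (p - n) (b + n) h * mdiff h f3 n))"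
    by (simp add: w_def F1_def F2_def mdiff_def algebra_simps)
  finally show ?thesis .
qed

lemma T1_eq: "complex_of_real T1 = (\<Sum>p\<in>{-K..K}. \<Sum>b\<in>{-K..K}. \<Sum>h\<in>{-K..K}. F1 p b h * V p b h)"
proof -
  let ?X = "\<lambda>p b h n. F1 p b h * (F2 (p - n) (b + n) h * mdiff h f3 n)"
  have w_supp: "\<And>n. w a b n \<noteq> 0 \<Longrightarrow> \<bar>n\<bar> \<le> int N" for a b
    using f3_supp_abs by (auto simp: w_def)
  have expand: "complex_of_real ((norm (W a b))\<^sup>2) =
      (\<Sum>n\<in>{-K..K}. \<Sum>h\<in>{-K..K}. w a b n * cnj (w a b (n + h)))" for a b
    unfolding W_def by (rule of_real_norm_sum_squared_shift[OF w_supp two_N_le_K])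
  have "complex_of_real T1 =
      (\<Sum>a\<in>{-K..K}. \<Sum>b\<in>{-K..K}. \<Sum>n\<in>{-K..K}. \<Sum>h\<in>{-K..K}. w a b n * cnj (w a b (n + h)))"
    unfolding T1_def of_real_sum expand ..
  also have "\<dots> = (\<Sum>b\<in>{-K..K}. \<Sum>n\<in>{-K..K}. \<Sum>a\<in>{-K..K}. \<Sum>h\<in>{-K..K}. w a b n * cnj (w a b (n + h)))"
    by (subst sum.swap) (rule sum.cong[OF refl sum.swap])
  also have "\<dots> = (\<Sum>b\<in>{-K..K}. \<Sum>n\<in>{-K..K}. \<Sum>p\<in>{-K..K}. \<Sum>h\<in>{-K..K}. ?X p b h n)"
    by (simp only: sum_w_correlation_eq)
  also have "\<dots> = (\<Sum>p\<in>{-K..K}. \<Sum>b\<in>{-K..K}. \<Sum>h\<in>{-K..K}. \<Sum>n\<in>{-K..K}. ?X p b h n)"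
    by (simp only: sum.cartesian_product)
      (rule sum.reindex_bij_witness[of _ "\<lambda>(p, b, h, n). (b, n, p, h)"
        "\<lambda>(b, n, p, h). (p, b, h, n)"], auto)
  also have "\<dots> = (\<Sum>p\<in>{-K..K}. \<Sum>b\<in>{-K..K}. \<Sum>h\<in>{-K..K}. F1 p b h * V p b h)"
    unfolding V_def by (simp only: sum_distrib_left)
  finally show ?thesis .
qed

lemma T1_squared_le: "T1\<^sup>2 \<le> L ^ 3 * T2"
proof -
  have "T1 \<ge> 0"
    unfolding T1_def by (intro sum_nonneg) simp
  then have "T1 = norm (complex_of_real T1)"
    by simp
  also have "\<dots> = norm (\<Sum>x\<in>{-K..K} \<times> {-K..K} \<times> {-K..K}.
      F1 (fst x) (fst (snd x)) (snd (snd x)) * V (fst x) (fst (snd x)) (snd (snd x)))"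
    unfolding T1_eq by (simp add: sum.cartesian_product')
  finally have "T1\<^sup>2 \<le> card ({-K..K} \<times> {-K..K} \<times> {-K..K}) *
      (\<Sum>x\<in>{-K..K} \<times> {-K..K} \<times> {-K..K}. (norm (V (fst x) (fst (snd x)) (snd (snd x))))\<^sup>2)"
    by (simp only: norm_sum_mult_squared_le_card F1_def norm_mult complex_mod_cnj
        norm_f1_le mult_le_one norm_ge_zero)
  also have "\<dots> = L ^ 3 * T2"
    unfolding L_def T2_def by (simp add: card_cartesian_product power3_eq_cube sum.cartesian_product')
  finally show ?thesis .
qed

lemma sum_V_correlation_eq:
  "(\<Sum>p\<in>{-K..K}. \<Sum>b\<in>{-K..K}. F2 (p - n) (b + n) h * mdiff h f3 n *
      cnj (F2 (p - (n + k)) (b + (n + k)) h * mdiff h f3 (n + k))) = Y h k * mdiff k (mdiff h f3) n"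
  (is "(\<Sum>p\<in>_. \<Sum>b\<in>_. ?X p b) = _")
proof (cases "f3 n = 0")
  case True
  then show ?thesis by (simp add: mdiff_def)
next
  case False
  then have n: "\<bar>n\<bar> \<le> int N" by (rule f3_supp_abs)
  then have room: "3 * int N + \<bar>n\<bar> \<le> K"
    unfolding K_def by simp
  have inner: "(\<Sum>b\<in>{-K..K}. ?X p (-n + b)) = (\<Sum>b\<in>{-K..K}. ?X p b)" for p
  proof (rule sum_interval_shift[where R = "3 * int N"])
    fix b assume "?X p b \<noteq> 0"
    then have "f2 (p - n, b + n) \<noteq> 0" by (auto simp: F2_def)
    then show "\<bar>b\<bar> \<le> 3 * int N" using f2_supp n by fastforce
  qed (simp add: room)
  have outer: "(\<Sum>p\<in>{-K..K}. \<Sum>b\<in>{-K..K}. ?X (n + p) (-n + b)) = (\<Sum>p\<in>{-K..K}. \<Sum>b\<in>{-K..K}. ?X p (-n + b))"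
  proof (rule sum_interval_shift[where g = "\<lambda>p. \<Sum>b\<in>{-K..K}. ?X p (-n + b)" and R = "3 * int N"])
    fix p assume "(\<Sum>b\<in>{-K..K}. ?X p (-n + b)) \<noteq> 0"
    then obtain b where "?X p (-n + b) \<noteq> 0" by (rule sum.not_neutral_contains_not_neutral)
    then have "f2 (p - n, -n + b + n) \<noteq> 0" by (auto simp: F2_def)
    then show "\<bar>p\<bar> \<le> 3 * int N" using f2_supp n by fastforce
  qed (simp add: room)
  have "(\<Sum>p\<in>{-K..K}. \<Sum>b\<in>{-K..K}. ?X p b) = (\<Sum>p\<in>{-K..K}. \<Sum>b\<in>{-K..K}. ?X p (-n + b))"
    by (simp only: inner)
  also have "\<dots> = (\<Sum>p\<in>{-K..K}. \<Sum>b\<in>{-K..K}. ?X (n + p) (-n + b))"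
    by (rule outer[symmetric])
  also have "\<dots> = Y h k * mdiff k (mdiff h f3) n"
  proof -
    have "n + p - n = p" "-n + b + n = b" "n + p - (n + k) = p - k" "-n + b + (n + k) = b + k"
      for p b by simp_all
    then show ?thesis
      unfolding Y_def sum_distrib_right by (simp add: F2_def mdiff_def ac_simps)
  qed
  finally show ?thesis .
qed

lemma T2_eq: "complex_of_real T2 = (\<Sum>h\<in>{-K..K}. \<Sum>k\<in>{-K..K}. Y h k * G h k)"
proof -
  let ?v = "\<lambda>p b h n. F2 (p - n) (b + n) h * mdiff h f3 n"
  have v_supp: "\<And>n. ?v p b h n \<noteq> 0 \<Longrightarrow> \<bar>n\<bar> \<le> int N" for p b h
    using f3_supp_abs by (auto simp: mdiff_def)
  have "complex_of_real T2 = (\<Sum>p\<in>{-K..K}. \<Sum>b\<in>{-K..K}. \<Sum>h\<in>{-K..K}. \<Sum>n\<in>{-K..K}. \<Sum>k\<in>{-K..K}.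
      ?v p b h n * cnj (?v p b h (n + k)))"
    unfolding T2_def V_def of_real_sum
    by (simp only: of_real_norm_sum_squared_shift[OF v_supp two_N_le_K])
  also have "\<dots> = (\<Sum>h\<in>{-K..K}. \<Sum>n\<in>{-K..K}. \<Sum>k\<in>{-K..K}. \<Sum>p\<in>{-K..K}. \<Sum>b\<in>{-K..K}.
      ?v p b h n * cnj (?v p b h (n + k)))"
    by (simp only: sum.cartesian_product)
      (rule sum.reindex_bij_witness[of _ "\<lambda>(h, n, k, p, b). (p, b, h, n, k)"
        "\<lambda>(p, b, h, n, k). (h, n, k, p, b)"], auto)
  also have "\<dots> = (\<Sum>h\<in>{-K..K}. \<Sum>k\<in>{-K..K}. \<Sum>n\<in>{-K..K}. Y h k * mdiff k (mdiff h f3) n)"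
    by (simp only: sum_V_correlation_eq) (rule sum.cong[OF refl sum.swap])
  also have "\<dots> = (\<Sum>h\<in>{-K..K}. \<Sum>k\<in>{-K..K}. Y h k * G h k)"
    unfolding G_def by (simp only: sum_distrib_left)
  finally show ?thesis .
qed

lemma norm_Y_le: "norm (Y h k) \<le> L\<^sup>2"
proof -
  have "norm (Y h k) \<le> (\<Sum>p\<in>{-K..K}. \<Sum>b\<in>{-K..K}. norm (F2 p b h * cnj (F2 (p - k) (b + k) h)))"
    unfolding Y_def by (rule order_trans[OF norm_sum sum_mono[OF norm_sum]])
  also have "\<dots> \<le> (\<Sum>p\<in>{-K..K}. \<Sum>b\<in>{-K..K}. 1)"
    by (intro sum_mono) (simp add: F2_def norm_mult norm_f2_le mult_le_one)
  also have "\<dots> = L\<^sup>2"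
    unfolding L_def by (simp only: sum_constant) (simp add: power2_eq_square)
  finally show ?thesis .
qed

lemma T2_nonneg: "T2 \<ge> 0"
  unfolding T2_def by (intro sum_nonneg) simp

lemma T2_le: "T2 \<le> L\<^sup>2 * Q"
proof -
  have "T2 = norm (complex_of_real T2)"
    using T2_nonneg by simp
  also have "\<dots> \<le> (\<Sum>h\<in>{-K..K}. \<Sum>k\<in>{-K..K}. norm (Y h k * G h k))"
    unfolding T2_eq by (rule order_trans[OF norm_sum sum_mono[OF norm_sum]])
  also have "\<dots> \<le> (\<Sum>h\<in>{-K..K}. \<Sum>k\<in>{-K..K}. L\<^sup>2 * norm (G h k))"
    by (intro sum_mono) (simp add: norm_mult norm_Y_le mult_right_mono)
  also have "\<dots> = L\<^sup>2 * Q"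
    unfolding Q_def by (simp add: sum_distrib_left)
  finally show ?thesis .
qed

lemma Q_squared_le: "Q\<^sup>2 \<le> L\<^sup>2 * U"
proof -
  have "Q\<^sup>2 = (\<Sum>x\<in>{-K..K} \<times> {-K..K}. 1 * norm (G (fst x) (snd x)))\<^sup>2"
    unfolding Q_def by (simp add: sum.cartesian_product')
  also have "\<dots> \<le> (\<Sum>x\<in>{-K..K} \<times> {-K..K}. 1\<^sup>2) * (\<Sum>x\<in>{-K..K} \<times> {-K..K}. (norm (G (fst x) (snd x)))\<^sup>2)"
    by (rule Cauchy_Schwarz_ineq_sum)
  also have "\<dots> = L\<^sup>2 * U"
    unfolding L_def U_def by (simp add: card_cartesian_product power2_eq_square sum.cartesian_product')
  finally show ?thesis .
qed

lemma gowers_U3_f3_eq: "gowers_U3 f3 = U powr (1/8)"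
  unfolding U_def G_def by (rule gowers_U3_eq_interval_sum[OF f3_supp_abs two_N_le_K])

lemma U_nonneg: "U \<ge> 0"
  unfolding U_def by (intro sum_nonneg) simp

lemma norm_S_pow8_le: "(norm S) ^ 8 \<le> L ^ 20 * U"
proof -
  have "(norm S) ^ 8 = ((norm S)\<^sup>2) ^ 4"
    by simp
  also have "\<dots> \<le> (L\<^sup>2 * T1) ^ 4"
    by (rule power_mono[OF norm_S_squared_le]) simp
  also have "\<dots> = L ^ 8 * (T1\<^sup>2)\<^sup>2"
    by (simp add: power_mult_distrib flip: power_mult)
  also have "\<dots> \<le> L ^ 8 * (L ^ 3 * T2)\<^sup>2"
    by (rule mult_left_mono[OF power_mono[OF T1_squared_le]]) (simp_all add: L_nonneg)
  also have "\<dots> = L ^ 14 * T2\<^sup>2"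
    by (simp add: power_mult_distrib flip: power_mult power_add)
  also have "\<dots> \<le> L ^ 14 * (L\<^sup>2 * Q)\<^sup>2"
    by (rule mult_left_mono[OF power_mono[OF T2_le]]) (simp_all add: L_nonneg T2_nonneg)
  also have "\<dots> = L ^ 18 * Q\<^sup>2"
    by (simp add: power_mult_distrib flip: power_mult power_add)
  also have "\<dots> \<le> L ^ 20 * U"
    using mult_left_mono[OF Q_squared_le, of "L ^ 18"] L_nonneg by (simp flip: power_add)
  finally show ?thesis .
qed

lemma norm_S_le: "norm S \<le> sqrt L ^ 5 * gowers_U3 f3"
proof -
  have "(U powr (1/8)) ^ 8 = U"
    using U_nonneg by (cases "U = 0") (simp_all add: powr_power)
  moreover have "sqrt L ^ 40 = (sqrt L ^ 2) ^ 20"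
    by (simp flip: power_mult)
  ultimately have "L ^ 20 * U = (sqrt L ^ 5 * gowers_U3 f3) ^ Suc 7"
    using L_nonneg by (simp add: gowers_U3_f3_eq power_mult_distrib flip: power_mult)
  then have "(norm S) ^ Suc 7 \<le> (sqrt L ^ 5 * gowers_U3 f3) ^ Suc 7"
    using norm_S_pow8_le by simp
  then show ?thesis
    by (rule power_le_imp_le_base) (simp add: L_nonneg gowers_U3_f3_eq)
qed

lemma corner_sum_eq_S:
  "(\<Sum>((a, b), n) \<in> ({-2 * int N..2 * int N} \<times> {-2 * int N..2 * int N}) \<times> {1..int N}.
     f0 (a, b) * f1 (a + n, b) * f2 (a, b + n) * f3 n) = S"
proof -
  let ?B = "{-2 * int N..2 * int N}"
  have vanish: "(\<lambda>((a, b), n). f0 (a, b) * f1 (a + n, b) * f2 (a, b + n) * f3 n) i = 0"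
    if "i \<notin> (?B \<times> ?B) \<times> {1..int N}" for i
  proof -
    obtain a b n where i: "i = ((a, b), n)"
      by (metis prod.collapse)
    show ?thesis
      using that f0_supp[of "(a, b)"] f3_supp[of n] unfolding i by auto
  qed
  have sub: "(?B \<times> ?B) \<times> {1..int N} \<subseteq> ({-K..K} \<times> {-K..K}) \<times> {-K..K}"
    unfolding K_def by auto
  have "(\<Sum>((a, b), n) \<in> (?B \<times> ?B) \<times> {1..int N}. f0 (a, b) * f1 (a + n, b) * f2 (a, b + n) * f3 n) =
      (\<Sum>((a, b), n) \<in> ({-K..K} \<times> {-K..K}) \<times> {-K..K}. f0 (a, b) * f1 (a + n, b) * f2 (a, b + n) * f3 n)"
    by (rule sum.mono_neutral_left[OF _ sub]) (simp, use vanish in blast)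
  also have "\<dots> = S"
    unfolding S_def W_def w_def by (simp add: sum.cartesian_product' sum_distrib_left mult.assoc)
  finally show ?thesis .
qed

lemma corner_average_le:
  "norm ((\<Sum>((a, b), n) \<in> ({-2 * int N..2 * int N} \<times> {-2 * int N..2 * int N}) \<times> {1..int N}.
            f0 (a, b) * f1 (a + n, b) * f2 (a, b + n) * f3 n)
         / of_nat (card (({-2 * int N..2 * int N} \<times> {-2 * int N..2 * int N}) \<times> {1..int N})))
   \<le> sqrt 21 ^ 5 * real N powr (-1/2) * gowers_U3 f3"
proof -
  define c where "c = real (card (({-2 * int N..2 * int N} \<times> {-2 * int N..2 * int N}) \<times> {1..int N}))"
  define s where "s = sqrt (real N)"
  have "s ^ 6 = (s\<^sup>2) ^ 3"
    by (simp flip: power_mult)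
  also have "\<dots> = real N ^ 3"
    by (simp add: s_def)
  also have "\<dots> \<le> (4 * real N + 1) * (4 * real N + 1) * real N"
    by (simp add: power3_eq_cube mult_mono)
  also have "\<dots> = c"
    unfolding c_def by (simp add: card_cartesian_product)
  finally have "s ^ 6 \<le> c" .
  have s: "s > 0"
    unfolding s_def using N_pos by simp
  have g: "gowers_U3 f3 \<ge> 0"
    by (simp add: gowers_U3_f3_eq)
  have "sqrt L \<le> sqrt 21 * s"
    using N_pos by (simp add: L_eq s_def flip: real_sqrt_mult)
  have "norm S / c \<le> sqrt L ^ 5 * gowers_U3 f3 / s ^ 6"
    using norm_S_le \<open>s ^ 6 \<le> c\<close> s g by (intro frac_le) (simp_all add: L_nonneg)
  also have "\<dots> \<le> (sqrt 21 * s) ^ 5 * gowers_U3 f3 / s ^ 6"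
    using \<open>sqrt L \<le> sqrt 21 * s\<close> g s
    by (intro divide_right_mono mult_right_mono power_mono) (simp_all add: L_nonneg)
  also have "\<dots> = sqrt 21 ^ 5 * (1 / s) * gowers_U3 f3"
    using s by (simp add: power_mult_distrib field_simps eval_nat_numeral)
  also have "1 / s = real N powr (-1/2)"
    unfolding s_def using N_pos by (simp add: powr_minus_divide powr_half_sqrt)
  finally show ?thesis
    by (simp only: corner_sum_eq_S norm_divide norm_of_nat c_def)
qed

end

theorem lemma3p4:
  shows "\<exists>C > (0::real). \<forall>(N::nat) (f0 :: int \<times> int \<Rightarrow> complex) f1 f2 (f3 :: int \<Rightarrow> complex).
     N \<ge> 1 \<longrightarrow>
     (\<forall>x. norm (f0 x) \<le> 1 \<and> norm (f1 x) \<le> 1 \<and> norm (f2 x) \<le> 1) \<longrightarrow>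
     (\<forall>x. x \<notin> {-2 * int N..2 * int N} \<times> {-2 * int N..2 * int N} \<longrightarrow>
          f0 x = 0 \<and> f1 x = 0 \<and> f2 x = 0) \<longrightarrow>
     (\<forall>n. norm (f3 n) \<le> 1) \<longrightarrow>
     (\<forall>n. n \<notin> {1..int N} \<longrightarrow> f3 n = 0) \<longrightarrow>
     norm ((\<Sum>((a, b), n) \<in> ({-2 * int N..2 * int N} \<times> {-2 * int N..2 * int N}) \<times> {1..int N}.
               f0 (a, b) * f1 (a + n, b) * f2 (a, b + n) * f3 n)
           / of_nat (card (({-2 * int N..2 * int N} \<times> {-2 * int N..2 * int N}) \<times> {1..int N})))
       \<le> C * real N powr (-1/2) * gowers_U3 f3"
proof (rule exI[of _ "sqrt 21 ^ 5"], intro conjI allI impI, goal_cases)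
  case 1
  show ?case by simp
next
  case (2 N f0 f1 f2 f3)
  interpret corner_average N f0 f1 f2 f3
    using 2 by unfold_locales blast+
  show ?case by (rule corner_average_le)
qed

end
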